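(* Let $\mathfrak{n}$ be the real $7$-dimensional Lie algebra with basis $e_1,\dots,e_7$ whose nonzero brackets (up to antisymmetry) are $[e_1,e_2]=e_5$, $[e_1,e_3]=e_7$, $[e_1,e_5]=e_6$, $[e_2,e_4]=e_7$, $[e_2,e_5]=e_7$. Then $\mathfrak{n}$ is an Einstein nilradical.
   Context: A real nilpotent Lie algebra $\mathfrak{n}$ is called an Einstein nilradical if it admits an inner product such that the left-invariant Riemannian metric it defines on the simply connected nilpotent Lie group with Lie algebra $\mathfrak{n}$ is a nilsoliton, i.e. its Ricci operator satisfies $\mathrm{Ric}=c\,\mathrm{Id}+D$ for some $c\in\mathbb{R}$ and some derivation $D$ of $\mathfrak{n}$. Brackets of basis elements not listed are zero. *)

theory Defs
  imports "HOL-Analysis.Analysis"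
begin

text \<open>A left-invariant metric is an inner product g
  on the Lie algebra.  The Levi-Civita connection, curvature and Ricci tensor of the
  left-invariant metric, restricted to left-invariant vector fields (which is where
  the Ricci operator of a left-invariant metric lives), are given algebraically by
  the Koszul formula, in which all derivative terms vanish.\<close>

definition inner_product_on :: "(real^'n \<Rightarrow> real^'n \<Rightarrow> real) \<Rightarrow> bool" where
  "inner_product_on g \<longleftrightarrow> bilinear g \<and> (\<forall>x y. g x y = g y x) \<and> (\<forall>x. x \<noteq> 0 \<longrightarrow> g x x > 0)"

definition lc_conn ::
  "(real^'n \<Rightarrow> real^'n \<Rightarrow> real^'n) \<Rightarrow> (real^'n \<Rightarrow> real^'n \<Rightarrow> real) \<Rightarrow> real^'n \<Rightarrow> real^'n \<Rightarrow> real^'n" where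
  "lc_conn br g X Y = (THE V. \<forall>Z. 2 * g V Z = g (br X Y) Z - g (br Y Z) X + g (br Z X) Y)"

definition curv ::
  "(real^'n \<Rightarrow> real^'n \<Rightarrow> real^'n) \<Rightarrow> (real^'n \<Rightarrow> real^'n \<Rightarrow> real) \<Rightarrow> real^'n \<Rightarrow> real^'n \<Rightarrow> real^'n \<Rightarrow> real^'n" where
  "curv br g X Y Z = lc_conn br g X (lc_conn br g Y Z) - lc_conn br g Y (lc_conn br g X Z)
                     - lc_conn br g (br X Y) Z"

definition ric_tensor ::
  "(real^'n \<Rightarrow> real^'n \<Rightarrow> real^'n) \<Rightarrow> (real^'n \<Rightarrow> real^'n \<Rightarrow> real) \<Rightarrow> real^'n \<Rightarrow> real^'n \<Rightarrow> real" where
  "ric_tensor br g X Y = (\<Sum>i\<in>UNIV. (curv br g (axis i 1) X Y) $ i)"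

definition ricci_op ::
  "(real^'n \<Rightarrow> real^'n \<Rightarrow> real^'n) \<Rightarrow> (real^'n \<Rightarrow> real^'n \<Rightarrow> real) \<Rightarrow> real^'n \<Rightarrow> real^'n" where
  "ricci_op br g X = (THE V. \<forall>Y. g V Y = ric_tensor br g X Y)"

definition is_derivation :: "(real^'n \<Rightarrow> real^'n \<Rightarrow> real^'n) \<Rightarrow> (real^'n \<Rightarrow> real^'n) \<Rightarrow> bool" where
  "is_derivation br D \<longleftrightarrow> linear D \<and> (\<forall>x y. D (br x y) = br (D x) y + br x (D y))"

definition nilsoliton ::
  "(real^'n \<Rightarrow> real^'n \<Rightarrow> real^'n) \<Rightarrow> (real^'n \<Rightarrow> real^'n \<Rightarrow> real) \<Rightarrow> bool" where
  "nilsoliton br g \<longleftrightarrow> (\<exists>(c::real) D. is_derivation br D \<and> (\<forall>X. ricci_op br g X = c *\<^sub>R X + D X))"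

definition einstein_nilradical :: "(real^'n \<Rightarrow> real^'n \<Rightarrow> real^'n) \<Rightarrow> bool" where
  "einstein_nilradical br \<longleftrightarrow> (\<exists>g. inner_product_on g \<and> nilsoliton br g)"

text \<open>Basis e_k = axis k 1 for k = 1..7 in the numeral
  type 7 (where the numeral 7 denotes the same index as 0).\<close>
definition n7_bracket :: "real^7 \<Rightarrow> real^7 \<Rightarrow> real^7" where
  "n7_bracket x y =
    (let m = (\<lambda>a b. x$a * y$b - x$b * y$a) in
     (\<chi> k. if k = 5 then m 1 2
           else if k = 6 then m 1 5
           else if k = 7 then m 1 3 + m 2 4 + m 2 5
           else 0))"

end

theory Submission
  imports Defs
begin

text \<open>The inner product making the algebra a nilsoliton is diagonal except for an
  e4-e5 coupling: with respect to it the Ricci operator is diagonal in the basis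
  e1,...,e7 with eigenvalues (-9,-8,-1,-2,-2,4,5)/288.  Shifting these by 15/288 gives
  the weights (6,7,14,13,13,19,20)/288, which are additive along every bracket
  relation, so the shifted Ricci operator is a derivation.  The Levi-Civita
  connection is guessed in closed form and then pinned down by the Koszul formula,
  using that an inner product is nondegenerate.\<close>

lemma inner_product_on_cancel:
  assumes "inner_product_on g" and "\<forall>Z. g V Z = g W Z"
  shows "V = W"
proof -
  have bil: "bilinear g" and pos: "\<And>x. x \<noteq> 0 \<Longrightarrow> g x x > 0"
    using assms(1) unfolding inner_product_on_def by blast+
  have "g (V - W) (V - W) = g V (V - W) - g W (V - W)"
    using bilinear_lsub[OF bil] .
  also have "\<dots> = 0" using assms(2) by simp
  finally show "V = W" using pos by (metis less_irrefl right_minus_eq)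
qed

lemma lc_conn_eqI:
  assumes "inner_product_on g"
    and "\<And>Z. 2 * g V Z = g (br X Y) Z - g (br Y Z) X + g (br Z X) Y"
  shows "lc_conn br g X Y = V"
  unfolding lc_conn_def
proof (rule the_equality)
  fix W assume W: "\<forall>Z. 2 * g W Z = g (br X Y) Z - g (br Y Z) X + g (br Z X) Y"
  have "\<forall>Z. g W Z = g V Z"
  proof
    fix Z show "g W Z = g V Z" using W[rule_format, of Z] assms(2)[of Z] by simp
  qed
  then show "W = V" using inner_product_on_cancel[OF assms(1)] by blast
qed (use assms(2) in blast)

lemma ricci_op_eqI:
  assumes "inner_product_on g" and "\<And>Y. g V Y = ric_tensor br g X Y"
  shows "ricci_op br g X = V"
  unfolding ricci_op_def
proof (rule the_equality)
  fix W assume "\<forall>Y. g W Y = ric_tensor br g X Y"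
  then have "\<forall>Y. g W Y = g V Y" using assms(2) by simp
  then show "W = V" using inner_product_on_cancel[OF assms(1)] by blast
qed (use assms(2) in blast)

definition diag_map :: "('n \<Rightarrow> real) \<Rightarrow> real^'n \<Rightarrow> real^'n" where
  "diag_map d x = (\<chi> k. d k * x $ k)"

lemma diag_map_nth [simp]: "diag_map d x $ k = d k * x $ k"
  by (simp add: diag_map_def)

lemma linear_diag_map: "linear (diag_map d)"
  by (rule linearI) (simp_all add: vec_eq_iff algebra_simps)

lemma diag_map_shift: "diag_map d x = c *\<^sub>R x + diag_map (\<lambda>k. d k - c) x"
  by (simp add: vec_eq_iff algebra_simps)

lemma exhaust_7:
  fixes x :: 7
  shows "x = 1 \<or> x = 2 \<or> x = 3 \<or> x = 4 \<or> x = 5 \<or> x = 6 \<or> x = 7"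
proof (induct x)
  case (of_int z)
  then have "z = 0 \<or> z = 1 \<or> z = 2 \<or> z = 3 \<or> z = 4 \<or> z = 5 \<or> z = 6" by fastforce
  then show ?case by auto
qed

lemma forall_7: "(\<forall>i::7. P i) \<longleftrightarrow> P 1 \<and> P 2 \<and> P 3 \<and> P 4 \<and> P 5 \<and> P 6 \<and> P 7"
  by (metis exhaust_7)

lemma sum_UNIV_7: "sum f (UNIV::7 set) = f 1 + f 2 + f 3 + f 4 + f 5 + f 6 + f 7"
proof -
  have UNIV_7: "(UNIV::7 set) = {1, 2, 3, 4, 5, 6, 7}" using exhaust_7 by auto
  show ?thesis unfolding UNIV_7 by (simp add: ac_simps)
qed

lemma n7_bracket_nth [simp]:
  "n7_bracket x y $ 1 = 0"
  "n7_bracket x y $ 2 = 0"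
  "n7_bracket x y $ 3 = 0"
  "n7_bracket x y $ 4 = 0"
  "n7_bracket x y $ 5 = x$1 * y$2 - x$2 * y$1"
  "n7_bracket x y $ 6 = x$1 * y$5 - x$5 * y$1"
  "n7_bracket x y $ 7 = (x$1 * y$3 - x$3 * y$1) + (x$2 * y$4 - x$4 * y$2) + (x$2 * y$5 - x$5 * y$2)"
  by (simp_all add: n7_bracket_def)

definition n7_metric :: "real^7 \<Rightarrow> real^7 \<Rightarrow> real" where
  "n7_metric x y = 12 * (x$1 * y$1 + x$2 * y$2 + x$3 * y$3) + 4 * x$4 * y$4
     + 2 * (x$4 * y$5 + x$5 * y$4) + 4 * x$5 * y$5 + x$6 * y$6 + x$7 * y$7"

lemma n7_metric_sum_of_squares:
  "n7_metric x x = 12 * ((x$1)\<^sup>2 + (x$2)\<^sup>2 + (x$3)\<^sup>2) + (2 * x$4 + x$5)\<^sup>2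
     + 3 * (x$5)\<^sup>2 + (x$6)\<^sup>2 + (x$7)\<^sup>2"
  by (simp add: n7_metric_def power2_eq_square algebra_simps)

lemma n7_metric_pos:
  assumes "x \<noteq> 0"
  shows "n7_metric x x > 0"
proof (rule ccontr)
  assume "\<not> n7_metric x x > 0"
  then have "12 * ((x$1)\<^sup>2 + (x$2)\<^sup>2 + (x$3)\<^sup>2) + (2 * x$4 + x$5)\<^sup>2
      + 3 * (x$5)\<^sup>2 + (x$6)\<^sup>2 + (x$7)\<^sup>2 \<le> 0"
    by (simp add: n7_metric_sum_of_squares)
  then have "(x$1)\<^sup>2 = 0 \<and> (x$2)\<^sup>2 = 0 \<and> (x$3)\<^sup>2 = 0 \<and> (2 * x$4 + x$5)\<^sup>2 = 0
      \<and> (x$5)\<^sup>2 = 0 \<and> (x$6)\<^sup>2 = 0 \<and> (x$7)\<^sup>2 = 0"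
    by (smt (verit) zero_le_power2)
  then have "x = 0" by (simp add: vec_eq_iff forall_7)
  with assms show False by simp
qed

lemma inner_product_on_n7_metric: "inner_product_on n7_metric"
proof -
  have "bilinear n7_metric"
    unfolding bilinear_def by (auto intro!: linearI simp: n7_metric_def algebra_simps)
  moreover have "n7_metric x y = n7_metric y x" for x y
    by (simp add: n7_metric_def algebra_simps)
  ultimately show ?thesis
    unfolding inner_product_on_def using n7_metric_pos by blast
qed

definition n7_connection :: "real^7 \<Rightarrow> real^7 \<Rightarrow> real^7" where
  "n7_connection x y = (\<chi> k.
     if k = 1 then (1/12) * x$2 * y$4 + (1/6) * x$2 * y$5 + (1/24) * x$3 * y$7 + (1/12) * x$4 * y$2
       + (1/6) * x$5 * y$2 + (1/24) * x$5 * y$6 + (1/24) * x$6 * y$5 + (1/24) * x$7 * y$3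
     else if k = 2 then (-1/12) * x$1 * y$4 + (-1/6) * x$1 * y$5 + (-1/12) * x$4 * y$1
       + (1/24) * x$4 * y$7 + (-1/6) * x$5 * y$1 + (1/24) * x$5 * y$7 + (1/24) * x$7 * y$4
       + (1/24) * x$7 * y$5
     else if k = 3 then (-1/24) * x$1 * y$7 + (-1/24) * x$7 * y$1
     else if k = 4 then (1/12) * x$1 * y$6 + (-1/12) * x$2 * y$7 + (1/12) * x$6 * y$1
       + (-1/12) * x$7 * y$2
     else if k = 5 then (1/2) * x$1 * y$2 + (-1/6) * x$1 * y$6 + (-1/2) * x$2 * y$1
       + (-1/12) * x$2 * y$7 + (-1/6) * x$6 * y$1 + (-1/12) * x$7 * y$2
     else if k = 6 then (1/2) * x$1 * y$5 + (-1/2) * x$5 * y$1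
     else (1/2) * x$1 * y$3 + (1/2) * x$2 * y$4 + (1/2) * x$2 * y$5 + (-1/2) * x$3 * y$1
       + (-1/2) * x$4 * y$2 + (-1/2) * x$5 * y$2)"

lemma lc_conn_n7: "lc_conn n7_bracket n7_metric X Y = n7_connection X Y"
  by (rule lc_conn_eqI[OF inner_product_on_n7_metric])
    (simp add: n7_metric_def n7_connection_def algebra_simps)

definition n7_ricci_eigenvalue :: "7 \<Rightarrow> real" where
  "n7_ricci_eigenvalue k =
     (if k = 1 then -9/288 else if k = 2 then -8/288 else if k = 3 then -1/288
      else if k = 4 then -2/288 else if k = 5 then -2/288 else if k = 6 then 4/288 else 5/288)"

lemma n7_ricci_eigenvalue_simps [simp]:
  "n7_ricci_eigenvalue 1 = -9/288" "n7_ricci_eigenvalue 2 = -8/288"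
  "n7_ricci_eigenvalue 3 = -1/288" "n7_ricci_eigenvalue 4 = -2/288"
  "n7_ricci_eigenvalue 5 = -2/288" "n7_ricci_eigenvalue 6 = 4/288"
  "n7_ricci_eigenvalue 7 = 5/288"
  by (simp_all add: n7_ricci_eigenvalue_def)

lemma ricci_op_n7: "ricci_op n7_bracket n7_metric X = diag_map n7_ricci_eigenvalue X"
proof (rule ricci_op_eqI[OF inner_product_on_n7_metric])
  fix Y
  show "n7_metric (diag_map n7_ricci_eigenvalue X) Y = ric_tensor n7_bracket n7_metric X Y"
    unfolding ric_tensor_def curv_def lc_conn_n7 sum_UNIV_7
    by (simp add: axis_def n7_metric_def n7_connection_def n7_ricci_eigenvalue_def algebra_simps)
qed

lemma is_derivation_n7_shifted_ricci:
  "is_derivation n7_bracket (diag_map (\<lambda>k. n7_ricci_eigenvalue k + 15/288))"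
  unfolding is_derivation_def
  by (simp add: linear_diag_map vec_eq_iff forall_7 field_simps)

theorem mainTheorem16:
  shows "einstein_nilradical n7_bracket"
proof -
  have "\<forall>X. ricci_op n7_bracket n7_metric X
      = (-15/288) *\<^sub>R X + diag_map (\<lambda>k. n7_ricci_eigenvalue k + 15/288) X"
    using diag_map_shift[of n7_ricci_eigenvalue _ "-15/288"] by (simp add: ricci_op_n7)
  then have "nilsoliton n7_bracket n7_metric"
    unfolding nilsoliton_def using is_derivation_n7_shifted_ricci by blast
  then show ?thesis
    unfolding einstein_nilradical_def using inner_product_on_n7_metric by blast
qed

end
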